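(* Let $G$ be a finite 3-regular graph with edge set $E(G)$, let $k\ge0$ be an integer, and let $d$ be an integer-valued cellular 1-cochain on $G$ with $d(e)\le k$ for every oriented edge $e$. Let $G'$ be the $\mathbb{Z}$-fold cover of $G$ constructed from $d$. Then there is a number $R$ depending only on $k$ and $|E(G)|$ such that $G'$ contains a simple loop of length at most $2R$.
   Context: A cellular 1-cochain assigns an integer $d(e)$ to each oriented edge $e$ with $d(\bar e)=-d(e)$ for the reversed edge $\bar e$ (so the hypothesis means $|d(e)|\le k$ for all edges). The $\mathbb{Z}$-fold cover $G'$ has vertex set $V(G)\times\mathbb{Z}$, and each edge $e$ of $G$ from $w$ to $v$ lifts to edges from $(w,j)$ to $(v,j+d(e))$ for all $j\in\mathbb{Z}$. Each edge has length $1$; a simple loop is a closed edge path with no repeated vertices. *)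

theory Defs
  imports Main
begin

text \<open>A finite (multi)graph given by oriented edges (darts) D, with tail src, head tgt
  and orientation reversal rv (a fixed-point-free involution swapping tail and head).
  Loops and multiple edges are allowed. The undirected edge set E(G) has card D div 2 elements.\<close>

definition dart_graph :: "nat set \<Rightarrow> nat set \<Rightarrow> (nat \<Rightarrow> nat) \<Rightarrow> (nat \<Rightarrow> nat) \<Rightarrow> (nat \<Rightarrow> nat) \<Rightarrow> bool" where
  "dart_graph V D src tgt rv \<longleftrightarrow> finite V \<and> finite D \<and>
     (\<forall>e\<in>D. src e \<in> V \<and> tgt e \<in> V \<and> rv e \<in> D \<and> rv e \<noteq> e \<and> rv (rv e) = e
            \<and> src (rv e) = tgt e \<and> tgt (rv e) = src e)"

text \<open>3-regular: every vertex has exactly three oriented edges leaving it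
  (a loop contributes two).\<close>
definition cubic :: "nat set \<Rightarrow> nat set \<Rightarrow> (nat \<Rightarrow> nat) \<Rightarrow> bool" where
  "cubic V D src \<longleftrightarrow> (\<forall>v\<in>V. card {e\<in>D. src e = v} = 3)"

definition cochain1 :: "nat set \<Rightarrow> (nat \<Rightarrow> nat) \<Rightarrow> (nat \<Rightarrow> int) \<Rightarrow> bool" where
  "cochain1 D rv d \<longleftrightarrow> (\<forall>e\<in>D. d (rv e) = - d e)"

text \<open>Oriented edges of the Z-fold cover G': pairs (e,j) meaning the lift of e from
  (src e, j) to (tgt e, j + d e).\<close>
definition cov_tail :: "(nat \<Rightarrow> nat) \<Rightarrow> nat \<times> int \<Rightarrow> nat \<times> int" where
  "cov_tail src p = (src (fst p), snd p)"

definition cov_head :: "(nat \<Rightarrow> nat) \<Rightarrow> (nat \<Rightarrow> int) \<Rightarrow> nat \<times> int \<Rightarrow> nat \<times> int" where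
  "cov_head tgt d p = (tgt (fst p), snd p + d (fst p))"

definition cov_rev :: "(nat \<Rightarrow> nat) \<Rightarrow> (nat \<Rightarrow> int) \<Rightarrow> nat \<times> int \<Rightarrow> nat \<times> int" where
  "cov_rev rv d p = (rv (fst p), snd p + d (fst p))"

text \<open>A simple loop in G': a nonempty closed edge path with no repeated vertices and
  no repeated (undirected) edges, so that it is an embedded circle (no backtracking).\<close>
definition simple_loop_cover ::
  "nat set \<Rightarrow> (nat \<Rightarrow> nat) \<Rightarrow> (nat \<Rightarrow> nat) \<Rightarrow> (nat \<Rightarrow> nat) \<Rightarrow> (nat \<Rightarrow> int) \<Rightarrow> (nat \<times> int) list \<Rightarrow> bool" where
  "simple_loop_cover D src tgt rv d ps \<longleftrightarrow>
     ps \<noteq> [] \<and> fst ` set ps \<subseteq> D \<and>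
     (\<forall>i < length ps. cov_head tgt d (ps ! i) = cov_tail src (ps ! (Suc i mod length ps))) \<and>
     distinct (map (cov_tail src) ps) \<and>
     distinct ps \<and>
     (\<forall>i < length ps. \<forall>j < length ps. ps ! j \<noteq> cov_rev rv d (ps ! i))"

end

(* Fix a dart e0 of G. As G is cubic, exactly 2^L non-backtracking walks of L+1 darts start
   with e0, and as |d| <= k their lifts to G' starting at height 0 end in the box
   V x [-k(L+1), k(L+1)]. For L large in terms of k and |E(G)| >= |V| there are more walks than
   points of the box, so two distinct lifts end at the same vertex of G'. Removing their common
   final darts and traversing the second one backwards gives a closed non-backtracking walk of
   length at most 2(L+1), and cutting such a walk at repeated vertices until none repeats leaves a
   simple loop. *)

theory Submission
  imports Defs
begin

lemma not_distinct_map_decomp: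
  assumes "\<not> distinct (map f w)"
  obtains u a v b z where "w = u @ a # v @ b # z" "f a = f b"
proof -
  obtain xs y ys zs where "map f w = xs @ y # ys @ y # zs"
    using not_distinct_decomp[OF assms] by auto
  then obtain u rest where "w = u @ rest" "y # ys @ y # zs = map f rest"
    using map_eq_append_conv by blast
  then obtain a r where "w = u @ a # r" "y = f a" "ys @ y # zs = map f r"
    using Cons_eq_map_conv by blast
  moreover from \<open>ys @ y # zs = map f r\<close> obtain v rest' where "r = v @ rest'" "y # zs = map f rest'"
    using map_eq_append_conv by metis
  then obtain b z where "r = v @ b # z" "y = f b"
    using Cons_eq_map_conv by blast
  ultimately show ?thesis
    using that by simp
qed

(* A graph given by its darts; "nb" abbreviates non-backtracking. Both G and its cover G' are
   instances, see cochain_cover. *)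
locale dart_system =
  fixes A :: "'a set" and tail head :: "'a \<Rightarrow> 'v" and flip :: "'a \<Rightarrow> 'a"
  assumes flip_in: "a \<in> A \<Longrightarrow> flip a \<in> A"
    and flip_neq: "a \<in> A \<Longrightarrow> flip a \<noteq> a"
    and flip_flip: "a \<in> A \<Longrightarrow> flip (flip a) = a"
    and tail_flip: "a \<in> A \<Longrightarrow> tail (flip a) = head a"
    and head_flip: "a \<in> A \<Longrightarrow> head (flip a) = tail a"
begin

definition nb_step :: "'a \<Rightarrow> 'a \<Rightarrow> bool" where
  "nb_step a b \<longleftrightarrow> head a = tail b \<and> b \<noteq> flip a"

definition nb_walk :: "'a list \<Rightarrow> bool" where
  "nb_walk w \<longleftrightarrow> set w \<subseteq> A \<and> successively nb_step w"

definition closed_nb_walk :: "'a list \<Rightarrow> bool" where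
  "closed_nb_walk w \<longleftrightarrow> nb_walk w \<and> w \<noteq> [] \<and> head (last w) = tail (hd w)"

definition simple_cycle :: "'a list \<Rightarrow> bool" where
  "simple_cycle w \<longleftrightarrow> w \<noteq> [] \<and> set w \<subseteq> A \<and>
     (\<forall>i < length w. head (w ! i) = tail (w ! (Suc i mod length w))) \<and>
     distinct (map tail w) \<and> distinct w \<and>
     (\<forall>i < length w. \<forall>j < length w. w ! j \<noteq> flip (w ! i))"

lemma nb_walk_Nil [simp]: "nb_walk []"
  by (simp add: nb_walk_def)

lemma nb_walk_Cons:
  "nb_walk (a # w) \<longleftrightarrow> a \<in> A \<and> nb_walk w \<and> (w = [] \<or> nb_step a (hd w))"
  by (auto simp: nb_walk_def successively_Cons)

lemma nb_walk_append:
  "nb_walk (u @ v) \<longleftrightarrow> nb_walk u \<and> nb_walk v \<and> (u = [] \<or> v = [] \<or> nb_step (last u) (hd v))"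
  by (auto simp: nb_walk_def successively_append_iff)

lemma nb_step_flip:
  "a \<in> A \<Longrightarrow> b \<in> A \<Longrightarrow> nb_step a b \<Longrightarrow> nb_step (flip b) (flip a)"
  by (auto simp: nb_step_def flip_flip tail_flip head_flip)

lemma nb_walk_rev_flip:
  assumes "nb_walk w"
  shows "nb_walk (rev (map flip w))"
proof -
  have "successively nb_step w" "set w \<subseteq> A"
    using assms by (auto simp: nb_walk_def)
  have "successively (\<lambda>a b. nb_step (flip b) (flip a)) w"
    using \<open>successively nb_step w\<close>
    by (rule successively_mono) (use \<open>set w \<subseteq> A\<close> nb_step_flip in blast)
  then show ?thesis
    using \<open>set w \<subseteq> A\<close> flip_in by (auto simp: nb_walk_def successively_map)
qed

lemma closed_nb_walk_append_rev_flip: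
  assumes "nb_walk u" "nb_walk v" "u \<noteq> []" "v \<noteq> []"
    and "tail (hd u) = tail (hd v)" "head (last u) = head (last v)" "last u \<noteq> last v"
  shows "closed_nb_walk (u @ rev (map flip v))"
proof -
  have "last u \<in> A" "last v \<in> A" "hd v \<in> A"
    using assms(1-4) by (auto simp: nb_walk_def)
  then have "flip (last v) \<noteq> flip (last u)"
    using assms(7) flip_flip by metis
  then have "nb_step (last u) (flip (last v))"
    using \<open>last v \<in> A\<close> assms(6) tail_flip by (auto simp: nb_step_def)
  moreover have "head (flip (hd v)) = tail (hd u)"
    using \<open>hd v \<in> A\<close> assms(5) head_flip by simp
  ultimately show ?thesis
    using assms nb_walk_rev_flip[OF assms(2)]
    by (auto simp: closed_nb_walk_def nb_walk_append hd_rev last_rev hd_map last_map)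
qed

lemma closed_nb_walk_nth:
  assumes "closed_nb_walk w" "i < length w"
  shows "w ! i \<in> A" and "Suc i < length w \<Longrightarrow> nb_step (w ! i) (w ! Suc i)"
    and "head (w ! i) = tail (w ! (Suc i mod length w))"
proof -
  show "w ! i \<in> A" and step: "Suc i < length w \<Longrightarrow> nb_step (w ! i) (w ! Suc i)"
    using assms by (auto simp: closed_nb_walk_def nb_walk_def successively_nth)
  show "head (w ! i) = tail (w ! (Suc i mod length w))"
  proof (cases "Suc i < length w")
    case True
    then show ?thesis using step by (simp add: nb_step_def)
  next
    case False
    then have "Suc i = length w" "w \<noteq> []" using assms(2) by auto
    then have "w ! i = last w" "Suc i mod length w = 0"
      by (metis diff_Suc_1 last_conv_nth, simp)
    then show ?thesis
      using assms(1) by (simp add: closed_nb_walk_def hd_conv_nth)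
  qed
qed

lemma closed_nb_walk_distinct_tails_no_flip:
  assumes closed: "closed_nb_walk w" and dist: "distinct (map tail w)"
    and "i < length w" "j < length w"
  shows "w ! j \<noteq> flip (w ! i)"
proof
  assume flipped: "w ! j = flip (w ! i)"
  define n where "n = length w"
  note nth = closed_nb_walk_nth[OF closed, folded n_def]
  have tail_inj: "p = q" if "p < n" "q < n" "tail (w ! p) = tail (w ! q)" for p q
    using nth_eq_iff_index_eq[OF dist, of p q] that by (simp add: n_def)
  have "i < n" "j < n" "n > 0" using assms by (auto simp: n_def)
  have "tail (w ! j) = tail (w ! (Suc i mod n))"
    using flipped nth(3)[OF \<open>i < n\<close>] tail_flip[OF nth(1)[OF \<open>i < n\<close>]] by simp
  then have j: "j = Suc i mod n"
    using tail_inj \<open>j < n\<close> \<open>n > 0\<close> by simp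
  show False
  proof (cases "Suc i < n")
    case True
    then show False using nth(2)[OF \<open>i < n\<close> True] flipped j by (simp add: nb_step_def)
  next
    case False
    then have "Suc i = n" using \<open>i < n\<close> by simp
    then have "i = n - 1" "j = 0" using j by simp_all
    show False
    proof (cases "i = 0")
      case True
      then show False using flipped \<open>j = 0\<close> flip_neq[OF nth(1)[OF \<open>n > 0\<close>]] by simp
    next
      case False
      (* w ! 0 reverses the last dart w ! i, so w ! 1 starts where w ! i does. *)
      then have "1 < n" using \<open>i = n - 1\<close> by simp
      have "tail (w ! 1) = head (w ! 0)"
        using nth(3)[OF \<open>n > 0\<close>] \<open>1 < n\<close> by simp
      also have "\<dots> = tail (w ! i)"
        using flipped \<open>j = 0\<close> head_flip nth(1)[OF \<open>i < n\<close>] by simp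
      finally have "i = 1" using tail_inj \<open>1 < n\<close> \<open>i < n\<close> by simp
      then have "w ! 1 = flip (w ! 0)"
        using flipped \<open>j = 0\<close> flip_flip nth(1)[OF \<open>i < n\<close>] by simp
      then show False using nth(2)[OF \<open>n > 0\<close>] \<open>1 < n\<close> by (simp add: nb_step_def)
    qed
  qed
qed

lemma closed_nb_walk_distinct_tails_simple_cycle:
  assumes "closed_nb_walk w" "distinct (map tail w)"
  shows "simple_cycle w"
  using assms closed_nb_walk_nth(3)[OF assms(1)] closed_nb_walk_distinct_tails_no_flip[OF assms]
  by (auto simp: simple_cycle_def closed_nb_walk_def nb_walk_def distinct_map)

lemma closed_nb_walk_contains_simple_cycle:
  assumes "closed_nb_walk w"
  shows "\<exists>c. simple_cycle c \<and> length c \<le> length w"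
  using assms
proof (induction "length w" arbitrary: w rule: less_induct)
  case less
  show ?case
  proof (cases "distinct (map tail w)")
    case True
    then show ?thesis
      using less.prems closed_nb_walk_distinct_tails_simple_cycle by blast
  next
    case False
    then obtain u a v b z where w: "w = u @ a # v @ b # z" and "tail a = tail b"
      by (rule not_distinct_map_decomp)
    have "nb_walk (a # v)" "nb_step (last (a # v)) b"
      using less.prems w nb_walk_append[of "a # v" "b # z"]
      by (simp_all add: closed_nb_walk_def nb_walk_append)
    then have "closed_nb_walk (a # v)"
      using \<open>tail a = tail b\<close> by (simp add: closed_nb_walk_def nb_step_def)
    moreover have "length (a # v) < length w" using w by simp
    ultimately show ?thesis
      using less.hyps by fastforce
  qed
qed

lemma closed_nb_walk_of_two_nb_walks:
  assumes "nb_walk u" "nb_walk v" "u \<noteq> v" "length u = length v"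
    and "tail (hd u) = tail (hd v)" "head (last u) = head (last v)"
  shows "\<exists>c. closed_nb_walk c \<and> length c \<le> 2 * length u"
  using assms
proof (induction u arbitrary: v rule: rev_induct)
  case Nil
  then show ?case by simp
next
  case (snoc x u)
  then obtain v' y where v: "v = v' @ [y]"
    by (metis length_0_conv rev_exhaust snoc_eq_iff_butlast)
  show ?case
  proof (cases "x = y")
    case True
    then have "u \<noteq> v'" "length u = length v'" "u \<noteq> []"
      using snoc.prems v by auto
    moreover have "nb_walk u" "nb_walk v'" "nb_step (last u) x" "nb_step (last v') x"
      using snoc.prems v True \<open>u \<noteq> []\<close> \<open>u \<noteq> v'\<close> \<open>length u = length v'\<close>
      by (auto simp: nb_walk_append)
    moreover have "tail (hd u) = tail (hd v')"
      using snoc.prems(5) v \<open>u \<noteq> []\<close> \<open>length u = length v'\<close> by (auto simp: hd_append)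
    ultimately obtain c where "closed_nb_walk c" "length c \<le> 2 * length u"
      using snoc.IH[of v'] by (auto simp: nb_step_def)
    then show ?thesis by force
  next
    case False
    then have "closed_nb_walk ((u @ [x]) @ rev (map flip v))"
      using snoc.prems v by (intro closed_nb_walk_append_rev_flip) auto
    then show ?thesis
      using snoc.prems(4) by (metis length_append length_map length_rev mult_2 order_refl)
  qed
qed

definition nb_succ :: "'a \<Rightarrow> 'a set" where
  "nb_succ a = {b \<in> A. nb_step a b}"

definition nb_walks_from :: "'a \<Rightarrow> nat \<Rightarrow> 'a list set" where
  "nb_walks_from a L = {w. nb_walk w \<and> length w = Suc L \<and> hd w = a}"

lemma finite_nb_walks_from:
  assumes "finite A"
  shows "finite (nb_walks_from a L)"
  by (rule finite_subset[OF _ finite_lists_length_eq[OF assms, of "Suc L"]])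
     (auto simp: nb_walks_from_def nb_walk_def)

lemma last_in_nb_walks_from: "w \<in> nb_walks_from a L \<Longrightarrow> last w \<in> A"
  using last_in_set[of w] by (fastforce simp: nb_walks_from_def nb_walk_def)

lemma nb_walks_from_Suc:
  "nb_walks_from a (Suc L) = (\<lambda>(w, b). w @ [b]) ` (SIGMA w:nb_walks_from a L. nb_succ (last w))"
proof (intro equalityI subsetI)
  fix w assume "w \<in> nb_walks_from a (Suc L)"
  then obtain u b where w: "w = u @ [b]" "u \<noteq> []"
    by (auto simp: nb_walks_from_def length_Suc_conv_rev)
  with \<open>w \<in> nb_walks_from a (Suc L)\<close> have "u \<in> nb_walks_from a L" "b \<in> nb_succ (last u)"
    by (auto simp: nb_walks_from_def nb_succ_def nb_walk_append nb_walk_Cons)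
  then show "w \<in> (\<lambda>(w, b). w @ [b]) ` (SIGMA w:nb_walks_from a L. nb_succ (last w))"
    using w by force
next
  fix w assume "w \<in> (\<lambda>(w, b). w @ [b]) ` (SIGMA w:nb_walks_from a L. nb_succ (last w))"
  then show "w \<in> nb_walks_from a (Suc L)"
    by (auto simp: nb_walks_from_def nb_succ_def nb_walk_append nb_walk_Cons hd_append)
qed

lemma card_nb_walks_from:
  assumes "finite A" "a \<in> A" and succ: "\<And>b. b \<in> A \<Longrightarrow> card (nb_succ b) = r"
  shows "card (nb_walks_from a L) = r ^ L"
proof (induction L)
  case 0
  have "nb_walks_from a 0 = {[a]}"
    using \<open>a \<in> A\<close> by (auto simp: nb_walks_from_def nb_walk_def length_Suc_conv)
  then show ?case by simp
next
  case (Suc L)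
  have fin_succ: "finite (nb_succ b)" for b
    using \<open>finite A\<close> by (simp add: nb_succ_def)
  have "card (nb_walks_from a (Suc L)) = card (SIGMA w:nb_walks_from a L. nb_succ (last w))"
    unfolding nb_walks_from_Suc by (rule card_image) (auto intro: inj_onI)
  also have "\<dots> = (\<Sum>w\<in>nb_walks_from a L. card (nb_succ (last w)))"
    using finite_nb_walks_from[OF \<open>finite A\<close>] fin_succ by simp
  also have "\<dots> = (\<Sum>w\<in>nb_walks_from a L. r)"
    using succ last_in_nb_walks_from by (intro sum.cong) auto
  also have "\<dots> = r ^ Suc L"
    using Suc.IH by simp
  finally show ?case .
qed

end

fun lift :: "(nat \<Rightarrow> int) \<Rightarrow> int \<Rightarrow> nat list \<Rightarrow> (nat \<times> int) list" where
  "lift d h [] = []"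
| "lift d h (e # w) = (e, h) # lift d (h + d e) w"

lemma map_fst_lift [simp]: "map fst (lift d h w) = w"
  by (induction w arbitrary: h) auto

lemma length_lift [simp]: "length (lift d h w) = length w"
  by (induction w arbitrary: h) auto

lemma lift_eq_Nil_iff [simp]: "lift d h w = [] \<longleftrightarrow> w = []"
  by (cases w) auto

lemma cov_head_last_lift:
  "w \<noteq> [] \<Longrightarrow> cov_head tgt d (last (lift d h w)) = (tgt (last w), h + sum_list (map d w))"
  by (induction w arbitrary: h rule: induct_list012) (auto simp: cov_head_def algebra_simps)

lemma hd_lift: "w \<noteq> [] \<Longrightarrow> hd (lift d h w) = (hd w, h)"
  by (cases w) auto

locale cochain_cover =
  fixes V D :: "nat set" and src tgt rv :: "nat \<Rightarrow> nat" and d :: "nat \<Rightarrow> int"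
  assumes graph: "dart_graph V D src tgt rv" and cochain: "cochain1 D rv d"

sublocale cochain_cover \<subseteq> base: dart_system D src tgt rv
  using graph by unfold_locales (auto simp: dart_graph_def)

sublocale cochain_cover \<subseteq> cover: dart_system "D \<times> UNIV" "cov_tail src" "cov_head tgt d" "cov_rev rv d"
  using graph cochain
  by unfold_locales (auto simp: dart_graph_def cochain1_def cov_tail_def cov_head_def cov_rev_def)

context cochain_cover
begin

lemma simple_loop_cover_iff: "simple_loop_cover D src tgt rv d ps \<longleftrightarrow> cover.simple_cycle ps"
  by (auto simp: simple_loop_cover_def cover.simple_cycle_def)

lemma cover_nb_step_iff:
  "cover.nb_step (e, h) (f, h') \<longleftrightarrow> base.nb_step e f \<and> h' = h + d e"
  by (auto simp: cover.nb_step_def base.nb_step_def cov_tail_def cov_head_def cov_rev_def)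

lemma cover_nb_walk_lift: "base.nb_walk w \<Longrightarrow> cover.nb_walk (lift d h w)"
proof (induction w arbitrary: h)
  case (Cons e w)
  then show ?case
    by (cases w) (auto simp: base.nb_walk_Cons cover.nb_walk_Cons cover_nb_step_iff)
qed simp

lemma abs_cochain_le:
  assumes "\<forall>e\<in>D. d e \<le> int k" "e \<in> D"
  shows "\<bar>d e\<bar> \<le> int k"
proof -
  have "rv e \<in> D" "d (rv e) = - d e"
    using graph cochain \<open>e \<in> D\<close> by (auto simp: dart_graph_def cochain1_def)
  then have "- d e \<le> int k"
    using assms(1) by fastforce
  then show ?thesis
    using assms by auto
qed

lemma cov_head_last_lift_in_box:
  assumes "base.nb_walk w" "w \<noteq> []" "\<forall>e\<in>D. d e \<le> int k"
  defines "K \<equiv> int k * int (length w)"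
  shows "cov_head tgt d (last (lift d 0 w)) \<in> V \<times> {-K..K}"
proof -
  have "set w \<subseteq> D" using assms(1) by (simp add: base.nb_walk_def)
  then have "- int k \<le> d e \<and> d e \<le> int k" if "e \<in> set w" for e
    using abs_cochain_le[OF assms(3), of e] that \<open>set w \<subseteq> D\<close> by (auto simp: abs_le_iff)
  then have "(\<Sum>e\<leftarrow>w. - int k) \<le> sum_list (map d w)" "sum_list (map d w) \<le> (\<Sum>e\<leftarrow>w. int k)"
    by (auto intro!: sum_list_mono simp del: sum_list_triv)
  moreover have "tgt (last w) \<in> V"
    using graph \<open>set w \<subseteq> D\<close> last_in_set[OF assms(2)] by (auto simp: dart_graph_def)
  ultimately show ?thesis
    using assms(2) by (simp add: cov_head_last_lift sum_list_triv K_def mult.commute)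
qed

lemma card_darts_cubic: "cubic V D src \<Longrightarrow> card D = 3 * card V"
proof -
  assume "cubic V D src"
  have "finite V" "finite D" and partition: "D = (\<Union>v\<in>V. {e\<in>D. src e = v})"
    using graph by (auto simp: dart_graph_def)
  then have "card D = (\<Sum>v\<in>V. card {e\<in>D. src e = v})"
    by (subst partition, subst card_UN_disjoint) auto
  also have "\<dots> = 3 * card V"
    using \<open>cubic V D src\<close> by (simp add: cubic_def)
  finally show ?thesis .
qed

lemma card_nb_succ_cubic:
  assumes "cubic V D src" "e \<in> D"
  shows "card (base.nb_succ e) = 2"
proof -
  have "tgt e \<in> V" "rv e \<in> {f\<in>D. src f = tgt e}"
    using graph \<open>e \<in> D\<close> by (auto simp: dart_graph_def)
  moreover have "base.nb_succ e = {f\<in>D. src f = tgt e} - {rv e}"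
    by (auto simp: base.nb_succ_def base.nb_step_def)
  moreover have "finite D" using graph by (simp add: dart_graph_def)
  ultimately show ?thesis
    using \<open>cubic V D src\<close> by (simp add: cubic_def)
qed

lemma nb_walks_with_common_lifted_endpoint:
  assumes cubic: "cubic V D src" and "e0 \<in> D" and k: "\<forall>e\<in>D. d e \<le> int k"
    and many_walks: "card V * (2 * k * Suc L + 1) < 2 ^ L"
  obtains w1 w2 where "w1 \<in> base.nb_walks_from e0 L" "w2 \<in> base.nb_walks_from e0 L" "w1 \<noteq> w2"
    "cov_head tgt d (last (lift d 0 w1)) = cov_head tgt d (last (lift d 0 w2))"
proof -
  have "finite V" "finite D" using graph by (auto simp: dart_graph_def)
  define W where "W = base.nb_walks_from e0 L"
  define endpoint where "endpoint w = cov_head tgt d (last (lift d 0 w))" for w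
  define K where "K = int k * int (Suc L)"
  have "endpoint ` W \<subseteq> V \<times> {-K..K}"
    using cov_head_last_lift_in_box[OF _ _ k]
    by (fastforce simp: W_def base.nb_walks_from_def endpoint_def K_def)
  moreover have "card (V \<times> {-K..K}) = card V * (2 * k * Suc L + 1)"
    by (simp add: card_cartesian_product K_def nat_add_distrib nat_mult_distrib)
  moreover have "card W = 2 ^ L"
    using base.card_nb_walks_from[OF \<open>finite D\<close> \<open>e0 \<in> D\<close> card_nb_succ_cubic[OF cubic]]
    by (simp add: W_def)
  ultimately have "\<not> inj_on endpoint W"
    using many_walks \<open>finite V\<close> card_inj_on_le[of endpoint W "V \<times> {-K..K}"] by fastforce
  then show ?thesis
    using that unfolding inj_on_def W_def endpoint_def by blast
qed

lemma short_simple_cycle_in_cover: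
  assumes cubic: "cubic V D src" and "V \<noteq> {}" and k: "\<forall>e\<in>D. d e \<le> int k"
    and many_walks: "card V * (2 * k * Suc L + 1) < 2 ^ L"
  shows "\<exists>c. cover.simple_cycle c \<and> length c \<le> 2 * Suc L"
proof -
  obtain v where "v \<in> V" using \<open>V \<noteq> {}\<close> by blast
  then have "card {e\<in>D. src e = v} = 3" using cubic by (simp add: cubic_def)
  then obtain e0 where "e0 \<in> D" by (metis (no_types, lifting) card.empty empty_Collect_eq zero_neq_numeral)
  then obtain w1 w2 where w: "w1 \<in> base.nb_walks_from e0 L" "w2 \<in> base.nb_walks_from e0 L"
    "w1 \<noteq> w2" "cov_head tgt d (last (lift d 0 w1)) = cov_head tgt d (last (lift d 0 w2))"
    using nb_walks_with_common_lifted_endpoint[OF cubic _ k many_walks] by blast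
  then have walks: "base.nb_walk w1" "base.nb_walk w2" "length w1 = Suc L" "length w2 = Suc L"
    "hd w1 = e0" "hd w2 = e0"
    by (auto simp: base.nb_walks_from_def)
  define c1 c2 where "c1 = lift d 0 w1" and "c2 = lift d 0 w2"
  have "cover.nb_walk c1" "cover.nb_walk c2" "length c1 = length c2"
    using walks cover_nb_walk_lift by (auto simp: c1_def c2_def)
  moreover have "c1 \<noteq> c2"
    using \<open>w1 \<noteq> w2\<close> map_fst_lift by (metis c1_def c2_def)
  moreover have "hd c1 = (e0, 0)" "hd c2 = (e0, 0)"
    using walks by (simp_all add: c1_def c2_def hd_lift flip: length_greater_0_conv)
  moreover have "cov_head tgt d (last c1) = cov_head tgt d (last c2)"
    using w(4) by (simp add: c1_def c2_def)
  ultimately have "\<exists>c. cover.closed_nb_walk c \<and> length c \<le> 2 * length c1"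
    by (intro cover.closed_nb_walk_of_two_nb_walks) simp_all
  then obtain c where "cover.closed_nb_walk c" "length c \<le> 2 * Suc L"
    using walks by (auto simp: c1_def)
  then obtain s where "cover.simple_cycle s" "length s \<le> length c"
    using cover.closed_nb_walk_contains_simple_cycle by blast
  then show ?thesis
    using \<open>length c \<le> 2 * Suc L\<close> by auto
qed

end

lemma square_le_two_power: "4 \<le> n \<Longrightarrow> n * n \<le> (2::nat) ^ n"
proof (induction n rule: dec_induct)
  case base
  then show ?case by simp
next
  case (step n)
  have "Suc n * Suc n = n * n + 2 * n + 1" by simp
  also have "\<dots> \<le> n * n + n * n"
    using step(1) mult_le_mono1[OF step(1), of n] by linarith
  also have "\<dots> \<le> 2 ^ Suc n"
    using step(3) by simp
  finally show ?case .
qed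

lemma box_card_lt_two_power:
  fixes m k :: nat
  defines "L \<equiv> 2 * (m * (2 * k + 1)) + 4"
  shows "m * (2 * k * Suc L + 1) < 2 ^ L"
proof -
  define c where "c = m * (2 * k + 1)"
  have L: "L = 2 * c + 4" by (simp add: L_def c_def)
  have "m * (2 * k * Suc L + 1) \<le> c * Suc L"
    unfolding c_def by (simp add: algebra_simps)
  also have "\<dots> < L * L"
    using L by (simp add: algebra_simps)
  also have "\<dots> \<le> 2 ^ L"
    using square_le_two_power L by simp
  finally show ?thesis .
qed

theorem lemma2p3:
  "\<exists>R :: nat \<Rightarrow> nat \<Rightarrow> nat. \<forall>(k::nat) V D src tgt rv (d :: nat \<Rightarrow> int).
     V \<noteq> {} \<and> dart_graph V D src tgt rv \<and> cubic V D src \<and> cochain1 D rv d \<and>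
     (\<forall>e\<in>D. d e \<le> int k)
     \<longrightarrow> (\<exists>ps. simple_loop_cover D src tgt rv d ps \<and> length ps \<le> 2 * R k (card D div 2))"
proof (intro exI[of _ "\<lambda>k m. Suc (2 * (m * (2 * k + 1)) + 4)"] allI impI, elim conjE)
  fix k V D src tgt rv and d :: "nat \<Rightarrow> int"
  assume "V \<noteq> {}" "dart_graph V D src tgt rv" "cubic V D src" "cochain1 D rv d"
    and k: "\<forall>e\<in>D. d e \<le> int k"
  then interpret cochain_cover V D src tgt rv d
    by unfold_locales
  define m where "m = card D div 2"
  define L where "L = 2 * (m * (2 * k + 1)) + 4"
  have "card V \<le> m"
    using card_darts_cubic[OF \<open>cubic V D src\<close>] by (simp add: m_def)
  then have "card V * (2 * k * Suc L + 1) \<le> m * (2 * k * Suc L + 1)"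
    by (rule mult_le_mono1)
  also have "\<dots> < 2 ^ L"
    unfolding L_def by (rule box_card_lt_two_power)
  finally have "\<exists>c. cover.simple_cycle c \<and> length c \<le> 2 * Suc L"
    by (rule short_simple_cycle_in_cover[OF \<open>cubic V D src\<close> \<open>V \<noteq> {}\<close> k])
  then show "\<exists>ps. simple_loop_cover D src tgt rv d ps \<and>
      length ps \<le> 2 * Suc (2 * (card D div 2 * (2 * k + 1)) + 4)"
    unfolding simple_loop_cover_iff L_def m_def .
qed

end
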